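(* Let $S$ be a finite set of states, $B\subseteq S$, $P_\pi$ the transition matrix of a finite Markov chain on $S$, and $0<\gamma_B<1$, $\gamma=1$. Let $\neg B_R$ be the set of states in rejecting bottom strongly connected components, $\neg B_{T,A}=S\setminus(B\cup\neg B_R)$, $X=B\cup\neg B_{T,A}$, $m=|B|$, $n'=|\neg B_{T,A}|$. Let $T$ be the restriction of $P_\pi$ to $X\times X$ (rows and columns ordered with $B$ first), and $$H=\begin{bmatrix}\gamma_B I_{m\times m}&\\&\gamma I_{n'\times n'}\end{bmatrix}T .$$ Let $(D_{(k)})_{k\ge0}$ be a sequence of vectors in $\mathbb{R}^{X}$ with $D_{(k+1)}=HD_{(k)}$ for all $k$ (e.g. the approximation error of dynamic-programming iterates for the surrogate reward restricted to $X$). Then there exist a constant $c\in(0,1)$ and a positive integer $N\le n'+1$ such that $\|D_{(k+N)}\|_\infty\le c\,\|D_{(k)}\|_\infty$ for all $k$.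
   Context: A strongly connected component (communicating class) of a finite Markov chain is a maximal set of mutually communicating states; a bottom strongly connected component (BSCC) is one with no outgoing transitions. A BSCC is rejecting if it contains no state of $B$, and accepting otherwise. *)

theory Defs
  imports Complex_Main
begin

definition markov_chain :: "'s set \<Rightarrow> ('s \<Rightarrow> 's \<Rightarrow> real) \<Rightarrow> bool" where
  "markov_chain S P \<longleftrightarrow> finite S \<and>
     (\<forall>s\<in>S. \<forall>t. P s t \<ge> 0) \<and>
     (\<forall>s\<in>S. \<forall>t. t \<notin> S \<longrightarrow> P s t = 0) \<and>
     (\<forall>s\<in>S. (\<Sum>t\<in>S. P s t) = 1)"

definition reach :: "'s set \<Rightarrow> ('s \<Rightarrow> 's \<Rightarrow> real) \<Rightarrow> ('s \<times> 's) set" where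
  "reach S P = {(s, t). s \<in> S \<and> t \<in> S \<and> P s t > 0}\<^sup>*"

definition communicate :: "'s set \<Rightarrow> ('s \<Rightarrow> 's \<Rightarrow> real) \<Rightarrow> 's \<Rightarrow> 's \<Rightarrow> bool" where
  "communicate S P s t \<longleftrightarrow> (s, t) \<in> reach S P \<and> (t, s) \<in> reach S P"

definition scc :: "'s set \<Rightarrow> ('s \<Rightarrow> 's \<Rightarrow> real) \<Rightarrow> 's set \<Rightarrow> bool" where
  "scc S P C \<longleftrightarrow> C \<noteq> {} \<and> C \<subseteq> S \<and>
     (\<forall>s\<in>C. \<forall>t\<in>C. communicate S P s t) \<and>
     (\<forall>s\<in>C. \<forall>t\<in>S. communicate S P s t \<longrightarrow> t \<in> C)"

definition bscc :: "'s set \<Rightarrow> ('s \<Rightarrow> 's \<Rightarrow> real) \<Rightarrow> 's set \<Rightarrow> bool" where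
  "bscc S P C \<longleftrightarrow> scc S P C \<and> (\<forall>s\<in>C. \<forall>t\<in>S. P s t > 0 \<longrightarrow> t \<in> C)"

definition rejecting_states :: "'s set \<Rightarrow> ('s \<Rightarrow> 's \<Rightarrow> real) \<Rightarrow> 's set \<Rightarrow> 's set" where
  "rejecting_states S P B = \<Union>{C. bscc S P C \<and> C \<inter> B = {}}"

definition H_op :: "'s set \<Rightarrow> ('s \<Rightarrow> 's \<Rightarrow> real) \<Rightarrow> 's set \<Rightarrow> real \<Rightarrow> real
                    \<Rightarrow> ('s \<Rightarrow> real) \<Rightarrow> 's \<Rightarrow> real" where
  "H_op X P B gB g v s = (if s \<in> B then gB else g) * (\<Sum>t\<in>X. P s t * v t)"

text \<open>Infinity norm of a vector indexed by the finite set X (0 if X is empty).\<close>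
definition inf_norm :: "'s set \<Rightarrow> ('s \<Rightarrow> real) \<Rightarrow> real" where
  "inf_norm X v = Max (insert 0 ((\<lambda>s. \<bar>v s\<bar>) ` X))"

end

theory Submission
  imports Defs
begin

text \<open>Every state of \<open>X = S - rejecting_states S P B\<close> can reach \<open>B\<close> or leave \<open>X\<close>, because
  it reaches some BSCC, which is either accepting or rejecting. The operator \<open>H\<close> is
  substochastic, and a row loses mass exactly at states of \<open>B\<close> (discount \<open>gB < 1\<close>) and at
  states with a transition out of \<open>X\<close>. Hence \<open>f\<^sub>j = H\<^sup>j 1\<close> satisfies \<open>0 \<le> f\<^sub>j \<le> 1\<close>, and
  \<open>f\<^sub>j\<^sub>+\<^sub>1 < 1\<close> at every state from which such a leaking state is reachable within \<open>j\<close> steps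
  inside \<open>X\<close>. These sets contain \<open>B\<close> and grow by at least one state per step until they
  exhaust \<open>X\<close>, so \<open>f\<^sub>N < 1\<close> on \<open>X\<close> for \<open>N = n' + 1\<close>. Positivity of \<open>H\<close> gives
  \<open>\<bar>D\<^sub>k\<^sub>+\<^sub>N\<bar> \<le> \<parallel>D\<^sub>k\<parallel>\<^sub>\<infinity> f\<^sub>N\<close> componentwise, so \<open>c = max f\<^sub>N\<close> works.\<close>

lemma reach_refl: "(s, s) \<in> reach S P"
  unfolding reach_def by simp

lemma reach_trans: "(s, t) \<in> reach S P \<Longrightarrow> (t, u) \<in> reach S P \<Longrightarrow> (s, u) \<in> reach S P"
  unfolding reach_def by (rule rtrancl_trans)

lemma reach_step: "s \<in> S \<Longrightarrow> t \<in> S \<Longrightarrow> P s t > 0 \<Longrightarrow> (s, t) \<in> reach S P"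
  unfolding reach_def by auto

lemma reach_closed:
  assumes "(s, t) \<in> reach S P" and "s \<in> S"
  shows "t \<in> S"
  using assms unfolding reach_def by (induction rule: rtrancl_induct) auto

lemma bscc_reachable_set:
  assumes t: "t \<in> S" and returns: "\<And>u. (t, u) \<in> reach S P \<Longrightarrow> (u, t) \<in> reach S P"
  shows "bscc S P {u. (t, u) \<in> reach S P}"
proof -
  let ?C = "{u. (t, u) \<in> reach S P}"
  have "t \<in> ?C" "?C \<subseteq> S" using reach_refl reach_closed[OF _ t] by auto
  moreover have "\<forall>x\<in>?C. \<forall>y\<in>?C. communicate S P x y"
    using returns unfolding communicate_def by (blast intro: reach_trans)
  moreover have "\<forall>x\<in>?C. \<forall>y. communicate S P x y \<longrightarrow> y \<in> ?C"
    unfolding communicate_def by (blast intro: reach_trans)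
  moreover have "\<forall>x\<in>?C. \<forall>y\<in>S. P x y > 0 \<longrightarrow> y \<in> ?C"
    using \<open>?C \<subseteq> S\<close> by (blast intro: reach_trans reach_step)
  ultimately show ?thesis unfolding bscc_def scc_def by blast
qed

text \<open>A state whose reachable set has minimal size among those reachable from \<open>s\<close> can be
  reached back from everything it reaches.\<close>
lemma reach_bscc:
  assumes fin: "finite S" and s: "s \<in> S"
  shows "\<exists>t. (s, t) \<in> reach S P \<and> bscc S P {u. (t, u) \<in> reach S P}"
proof -
  define succs where "succs x = {y. (x, y) \<in> reach S P}" for x
  have finite_succs: "finite (succs x)" if "x \<in> S" for x
    using finite_subset[OF _ fin] reach_closed[OF _ that] unfolding succs_def
    by (metis mem_Collect_eq subsetI)
  obtain t where st: "(s, t) \<in> reach S P"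
    and t_min: "\<And>u. (s, u) \<in> reach S P \<Longrightarrow> card (succs t) \<le> card (succs u)"
    using ex_has_least_nat[of "\<lambda>u. (s, u) \<in> reach S P" s "\<lambda>u. card (succs u)"]
      reach_refl[of s S P] by blast
  have t: "t \<in> S" using reach_closed[OF st s] .
  have "(u, t) \<in> reach S P" if tu: "(t, u) \<in> reach S P" for u
  proof -
    have sub: "succs u \<subseteq> succs t"
      unfolding succs_def using reach_trans[OF tu] by blast
    moreover have "card (succs t) \<le> card (succs u)"
      using t_min reach_trans[OF st tu] .
    ultimately have "succs u = succs t"
      using card_seteq[OF finite_succs[OF t]] by blast
    then show ?thesis using reach_refl[of t S P] unfolding succs_def by blast
  qed
  then show ?thesis using st bscc_reachable_set[OF t] by blast
qed

lemma rejecting_states_subset: "rejecting_states S P B \<subseteq> S"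
  unfolding rejecting_states_def bscc_def scc_def by auto

lemma rejecting_states_disjoint: "B \<inter> rejecting_states S P B = {}"
  unfolding rejecting_states_def by auto

lemma reach_accepting_or_rejecting:
  assumes "finite S" and "s \<in> S"
  shows "\<exists>t \<in> B \<union> rejecting_states S P B. (s, t) \<in> reach S P"
proof -
  obtain t where st: "(s, t) \<in> reach S P" and C: "bscc S P {u. (t, u) \<in> reach S P}"
    using reach_bscc[OF assms] by blast
  show ?thesis
  proof (cases "{u. (t, u) \<in> reach S P} \<inter> B = {}")
    case True
    then have "t \<in> rejecting_states S P B"
      using C reach_refl[of t] unfolding rejecting_states_def by blast
    then show ?thesis using st by blast
  next
    case False
    then show ?thesis using st by (blast intro: reach_trans)
  qed
qed

lemma rtrancl_crossing_edge:
  assumes "(a, b) \<in> E\<^sup>*" and "a \<notin> Q" and "b \<in> Q"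
  shows "\<exists>u v. (u, v) \<in> E \<and> u \<notin> Q \<and> v \<in> Q"
  using assms by (induction rule: converse_rtrancl_induct) blast+

lemma abs_le_inf_norm: "finite X \<Longrightarrow> s \<in> X \<Longrightarrow> \<bar>v s\<bar> \<le> inf_norm X v"
  unfolding inf_norm_def by (simp add: Max_ge_iff)

lemma inf_norm_nonneg: "finite X \<Longrightarrow> 0 \<le> inf_norm X v"
  unfolding inf_norm_def by (simp add: Max_ge_iff)

lemma inf_norm_le: "finite X \<Longrightarrow> 0 \<le> M \<Longrightarrow> (\<And>s. s \<in> X \<Longrightarrow> \<bar>v s\<bar> \<le> M) \<Longrightarrow> inf_norm X v \<le> M"
  unfolding inf_norm_def by (simp add: Max_le_iff)

locale discounted_subchain =
  fixes S X B :: "'s set" and P :: "'s \<Rightarrow> 's \<Rightarrow> real" and gB g :: real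
  assumes markov_chain: "markov_chain S P"
    and X_subset: "X \<subseteq> S" and B_subset: "B \<subseteq> X"
    and gB: "0 \<le> gB" "gB < 1" and g: "0 \<le> g" "g \<le> 1"
begin

abbreviation H :: "('s \<Rightarrow> real) \<Rightarrow> 's \<Rightarrow> real" where
  "H \<equiv> H_op X P B gB g"

definition survival :: "nat \<Rightarrow> 's \<Rightarrow> real" where
  "survival j = (H ^^ j) (\<lambda>_. 1)"

definition leaking :: "'s set" where
  "leaking = B \<union> {s\<in>X. \<exists>t\<in>S - X. P s t > 0}"

primrec leaks_within :: "nat \<Rightarrow> 's set" where
  "leaks_within 0 = leaking"
| "leaks_within (Suc j) = leaking \<union> {s\<in>X. \<exists>t\<in>leaks_within j. P s t > 0}"

lemma finite_X: "finite X"
  using markov_chain X_subset finite_subset by (auto simp: markov_chain_def)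

lemma P_nonneg: "s \<in> X \<Longrightarrow> 0 \<le> P s t"
  using markov_chain X_subset by (auto simp: markov_chain_def)

lemma row_deficit:
  assumes s: "s \<in> X"
  shows "1 - (\<Sum>t\<in>X. P s t * v t) = (\<Sum>t\<in>S - X. P s t) + (\<Sum>t\<in>X. P s t * (1 - v t))"
proof -
  have "(\<Sum>t\<in>S. P s t) = (\<Sum>t\<in>S - X. P s t) + (\<Sum>t\<in>X. P s t)"
    using markov_chain X_subset by (simp add: markov_chain_def sum.subset_diff)
  then show ?thesis
    using markov_chain s X_subset by (auto simp: markov_chain_def algebra_simps sum_subtractf)
qed

lemma row_average_unit_interval:
  assumes v: "\<And>t. t \<in> X \<Longrightarrow> 0 \<le> v t \<and> v t \<le> 1" and s: "s \<in> X"
  shows "0 \<le> (\<Sum>t\<in>X. P s t * v t) \<and> (\<Sum>t\<in>X. P s t * v t) \<le> 1"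
proof -
  have "0 \<le> (\<Sum>t\<in>S - X. P s t) + (\<Sum>t\<in>X. P s t * (1 - v t))"
    using v P_nonneg[OF s] by (intro add_nonneg_nonneg sum_nonneg) simp_all
  moreover have "0 \<le> (\<Sum>t\<in>X. P s t * v t)"
    using v P_nonneg[OF s] by (intro sum_nonneg) simp
  ultimately show ?thesis
    using row_deficit[OF s, of v] by linarith
qed

lemma H_unit_interval:
  assumes "\<And>t. t \<in> X \<Longrightarrow> 0 \<le> v t \<and> v t \<le> 1" and "s \<in> X"
  shows "0 \<le> H v s \<and> H v s \<le> 1"
  using row_average_unit_interval[OF assms] gB g by (simp add: H_op_def mult_le_one)

lemma H_less_one:
  assumes v: "\<And>t. t \<in> X \<Longrightarrow> 0 \<le> v t \<and> v t \<le> 1" and s: "s \<in> X"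
    and leak: "s \<in> leaking \<or> (\<exists>t\<in>X. P s t > 0 \<and> v t < 1)"
  shows "H v s < 1"
proof (cases "s \<in> B")
  case True
  then show ?thesis
    using row_average_unit_interval[of v s, OF v s] gB
      mult_left_le[of "\<Sum>t\<in>X. P s t * v t" gB] by (simp add: H_op_def)
next
  case False
  have finite_S: "finite S" using markov_chain by (simp add: markov_chain_def)
  have "0 < (\<Sum>t\<in>S - X. P s t) \<or> 0 < (\<Sum>t\<in>X. P s t * (1 - v t))"
    using leak False P_nonneg[OF s] v finite_S finite_X unfolding leaking_def
    by (auto intro!: sum_pos2)
  moreover have "0 \<le> (\<Sum>t\<in>S - X. P s t)" "0 \<le> (\<Sum>t\<in>X. P s t * (1 - v t))"
    using v P_nonneg[OF s] by (auto intro: sum_nonneg)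
  ultimately have "(\<Sum>t\<in>X. P s t * v t) < 1"
    using row_deficit[OF s, of v] by linarith
  moreover have "0 \<le> (\<Sum>t\<in>X. P s t * v t)"
    using row_average_unit_interval[of v s, OF v s] by simp
  ultimately show ?thesis
    using False g mult_left_le_one_le[of "\<Sum>t\<in>X. P s t * v t" g] by (simp add: H_op_def)
qed

lemma abs_H_le:
  assumes bound: "\<And>t. t \<in> X \<Longrightarrow> \<bar>v t\<bar> \<le> M * w t" and s: "s \<in> X"
  shows "\<bar>H v s\<bar> \<le> M * H w s"
proof -
  define c where "c = (if s \<in> B then gB else g)"
  have c: "0 \<le> c" using gB g by (simp add: c_def)
  have "\<bar>H v s\<bar> = c * \<bar>\<Sum>t\<in>X. P s t * v t\<bar>"
    using c by (simp add: H_op_def c_def abs_mult)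
  also have "\<dots> \<le> c * (\<Sum>t\<in>X. P s t * \<bar>v t\<bar>)"
    using sum_abs[of "\<lambda>t. P s t * v t" X] P_nonneg[OF s] c
    by (intro mult_left_mono) (simp_all add: abs_mult)
  also have "\<dots> \<le> c * (\<Sum>t\<in>X. P s t * (M * w t))"
    using bound P_nonneg[OF s] c by (intro mult_left_mono sum_mono) auto
  also have "\<dots> = M * H w s"
    by (simp add: H_op_def c_def sum_distrib_left algebra_simps)
  finally show ?thesis .
qed

lemma survival_Suc: "survival (Suc j) = H (survival j)"
  by (simp add: survival_def)

lemma survival_unit_interval: "s \<in> X \<Longrightarrow> 0 \<le> survival j s \<and> survival j s \<le> 1"
proof (induction j arbitrary: s)
  case 0
  then show ?case by (simp add: survival_def)
next
  case (Suc j)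
  then show ?case
    using H_unit_interval[of "survival j" s] by (simp add: survival_Suc)
qed

lemma leaks_within_subset: "leaks_within j \<subseteq> X"
  using B_subset by (cases j) (auto simp: leaking_def)

lemma leaking_subset_leaks_within: "leaking \<subseteq> leaks_within j"
  by (cases j) auto

lemma leaks_within_mono: "leaks_within j \<subseteq> leaks_within (Suc j)"
  by (induction j) auto

lemma survival_less_one: "s \<in> leaks_within j \<Longrightarrow> survival (Suc j) s < 1"
proof (induction j arbitrary: s)
  case 0
  then show ?case
    using H_less_one[of "\<lambda>_. 1" s] leaks_within_subset[of 0] by (auto simp: survival_def)
next
  case (Suc j)
  have s: "s \<in> X" using Suc.prems leaks_within_subset by blast
  have "s \<in> leaking \<or> (\<exists>t\<in>X. P s t > 0 \<and> survival (Suc j) t < 1)"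
    using Suc leaks_within_subset[of j] by auto
  then show ?case
    unfolding survival_Suc[of "Suc j"] using H_less_one[OF _ s] survival_unit_interval by blast
qed

lemma leaks_within_grows:
  assumes escape: "\<And>s. s \<in> X \<Longrightarrow> \<exists>t \<in> B \<union> (S - X). (s, t) \<in> reach S P"
    and proper: "leaks_within j \<noteq> X"
  shows "leaks_within j \<subset> leaks_within (Suc j)"
proof -
  define Q where "Q = leaks_within j \<union> (S - X)"
  obtain s where s: "s \<in> X" "s \<notin> leaks_within j"
    using proper leaks_within_subset by blast
  then obtain t where t: "t \<in> B \<union> (S - X)" "(s, t) \<in> reach S P"
    using escape by blast
  have "t \<in> Q" "s \<notin> Q"
    using t(1) s B_subset leaking_subset_leaks_within[of j] unfolding Q_def leaking_def by auto
  then obtain u v where uv: "u \<in> S" "v \<in> S" "P u v > 0" "u \<notin> Q" "v \<in> Q"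
    using rtrancl_crossing_edge[OF t(2)[unfolded reach_def]] by blast
  have "v \<in> leaks_within j"
  proof (rule ccontr)
    assume "v \<notin> leaks_within j"
    then have "u \<in> leaking" using uv unfolding Q_def leaking_def by auto
    then show False using uv leaking_subset_leaks_within[of j] unfolding Q_def by blast
  qed
  then have "u \<in> leaks_within (Suc j) - leaks_within j" using uv unfolding Q_def by auto
  then show ?thesis using leaks_within_mono[of j] by blast
qed

lemma card_leaks_within:
  assumes escape: "\<And>s. s \<in> X \<Longrightarrow> \<exists>t \<in> B \<union> (S - X). (s, t) \<in> reach S P"
  shows "min (card X) (card B + j) \<le> card (leaks_within j)"
proof (induction j)
  case 0
  have "card B \<le> card (leaks_within 0)"
    by (rule card_mono[OF finite_subset[OF leaks_within_subset finite_X]]) (simp add: leaking_def)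
  then show ?case by simp
next
  case (Suc j)
  show ?case
  proof (cases "leaks_within j = X")
    case True
    then have "leaks_within (Suc j) = X"
      using leaks_within_mono[of j] leaks_within_subset[of "Suc j"] by blast
    then show ?thesis by simp
  next
    case False
    then have "card (leaks_within j) < card (leaks_within (Suc j))"
      using leaks_within_grows[OF escape] finite_subset[OF leaks_within_subset finite_X]
      by (blast intro: psubset_card_mono)
    then show ?thesis using Suc.IH by linarith
  qed
qed

lemma leaks_within_eq_X:
  assumes escape: "\<And>s. s \<in> X \<Longrightarrow> \<exists>t \<in> B \<union> (S - X). (s, t) \<in> reach S P"
  shows "leaks_within (card (X - B)) = X"
proof -
  have "card B \<le> card X" using card_mono[OF finite_X B_subset] .
  then have "card X \<le> card (leaks_within (card (X - B)))"
    using card_leaks_within[OF escape, of "card (X - B)"]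
      card_Diff_subset[OF finite_subset[OF B_subset finite_X] B_subset] by simp
  then show ?thesis
    using card_seteq[OF finite_X leaks_within_subset] by blast
qed

lemma abs_orbit_le:
  assumes rec: "\<And>k s. s \<in> X \<Longrightarrow> D (Suc k) s = H (D k) s" and s: "s \<in> X"
  shows "\<bar>D (k + j) s\<bar> \<le> inf_norm X (D k) * survival j s"
  using s
proof (induction j arbitrary: s)
  case 0
  then show ?case by (simp add: survival_def abs_le_inf_norm finite_X)
next
  case (Suc j)
  then show ?case
    using abs_H_le[of "D (k + j)" "inf_norm X (D k)" "survival j" s] rec by (simp add: survival_Suc)
qed

lemma contraction:
  assumes escape: "\<And>s. s \<in> X \<Longrightarrow> \<exists>t \<in> B \<union> (S - X). (s, t) \<in> reach S P"
    and rec: "\<And>k s. s \<in> X \<Longrightarrow> D (Suc k) s = H (D k) s"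
  shows "\<exists>c. 0 < c \<and> c < 1 \<and>
           (\<forall>k. inf_norm X (D (k + Suc (card (X - B)))) \<le> c * inf_norm X (D k))"
proof -
  define N where "N = Suc (card (X - B))"
  have less_one: "\<forall>s\<in>X. survival N s < 1"
    using survival_less_one leaks_within_eq_X[OF escape] unfolding N_def by blast
  \<comment> \<open>The \<open>1/2\<close> only keeps \<open>c\<close> positive when \<open>X\<close> is empty.\<close>
  define c where "c = Max (insert (1/2) (survival N ` X))"
  have "1/2 \<le> c"
    unfolding c_def using finite_X by (intro Max_ge) auto
  moreover have "\<forall>s\<in>X. survival N s \<le> c"
    unfolding c_def using finite_X by simp
  moreover have "c < 1"
    unfolding c_def using finite_X less_one by simp
  moreover have "inf_norm X (D (k + N)) \<le> c * inf_norm X (D k)" for k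
  proof (rule inf_norm_le[OF finite_X])
    show "0 \<le> c * inf_norm X (D k)"
      using \<open>1/2 \<le> c\<close> inf_norm_nonneg[OF finite_X] by simp
    fix s assume s: "s \<in> X"
    have "\<bar>D (k + N) s\<bar> \<le> inf_norm X (D k) * survival N s"
      using abs_orbit_le[of D, OF rec s] .
    also have "\<dots> \<le> inf_norm X (D k) * c"
      using s \<open>\<forall>s\<in>X. survival N s \<le> c\<close>
      by (intro mult_left_mono inf_norm_nonneg finite_X) auto
    also have "\<dots> = c * inf_norm X (D k)"
      by (rule mult.commute)
    finally show "\<bar>D (k + N) s\<bar> \<le> c * inf_norm X (D k)" .
  qed
  ultimately show ?thesis unfolding N_def by force
qed

end

theorem lemma3:
  fixes S B :: "'s set" and P :: "'s \<Rightarrow> 's \<Rightarrow> real"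
    and gB g :: real and D :: "nat \<Rightarrow> 's \<Rightarrow> real"
  assumes mc: "markov_chain S P"
    and BS: "B \<subseteq> S"
    and gB: "0 < gB" "gB < 1"
    and g: "g = 1"
    and rec: "\<forall>k. \<forall>s \<in> S - rejecting_states S P B.
               D (Suc k) s = H_op (S - rejecting_states S P B) P B gB g (D k) s"
  shows "\<exists>c N. 0 < c \<and> c < 1 \<and> 0 < N \<and>
           N \<le> card (S - (B \<union> rejecting_states S P B)) + 1 \<and>
           (\<forall>k. inf_norm (S - rejecting_states S P B) (D (k + N))
                 \<le> c * inf_norm (S - rejecting_states S P B) (D k))"
proof -
  define X where "X = S - rejecting_states S P B"
  have chain: "discounted_subchain S X B P gB g"
    using mc BS gB g rejecting_states_disjoint[of B S P]
    by unfold_locales (auto simp: X_def)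
  have "\<exists>t \<in> B \<union> (S - X). (s, t) \<in> reach S P" if "s \<in> X" for s
    using reach_accepting_or_rejecting[of S s B P] rejecting_states_subset[of S P B] mc that
    by (auto simp: X_def markov_chain_def)
  then obtain c where "0 < c" "c < 1"
    "\<forall>k. inf_norm X (D (k + Suc (card (X - B)))) \<le> c * inf_norm X (D k)"
    using discounted_subchain.contraction[OF chain] rec unfolding X_def by blast
  moreover have "S - (B \<union> rejecting_states S P B) = X - B"
    by (auto simp: X_def)
  ultimately show ?thesis
    unfolding X_def[symmetric] by (intro exI[of _ c] exI[of _ "Suc (card (X - B))"]) auto
qed

end
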